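(* Let $H$ be a graph and $q$ a positive integer. Then $H$ is cross-bipartite swapping in $K_q$ if and only if for all nonempty $A,B\subseteq V(K_q)$ with $A\subseteq B$, \[ \hom(H,K_q[A])\,\hom(H,K_q[B])\le\hom_{\mathrm b}(H\times K_2,K_q[A,B]). \]
   Context: $K_q$ is the loopless complete graph on $q$ vertices; $K_q[A]$ is the induced subgraph on $A$; $\hom$ counts homomorphisms. The tensor product $H\times K_2$ has vertex set $V(H)\times\{1,2\}$ with $(u,i)\sim(v,j)$ iff $uv\in E(H)$ and $i\ne j$. For $A,B\subseteq V(K_q)$, $\hom_{\mathrm b}(H\times K_2,K_q[A,B])$ is the number of homomorphisms $H\times K_2\to K_q$ mapping $V(H)\times\{1\}$ into $A$ and $V(H)\times\{2\}$ into $B$. $H$ is cross-bipartite swapping in $K_q$ if the displayed inequality holds for all $A,B\subseteq V(K_q)$. *)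

theory Defs
  imports Main
begin

text \<open>Graphs: a finite vertex type 'v with an edge relation E (symmetric, irreflexive).
  K_q has vertex set {..<q}; homomorphisms into K_q[A] are maps into A sending
  adjacent vertices to distinct colours.\<close>

definition hom_K :: "('v \<Rightarrow> 'v \<Rightarrow> bool) \<Rightarrow> nat set \<Rightarrow> nat" where
  "hom_K E A = card {f :: 'v \<Rightarrow> nat. (\<forall>x. f x \<in> A) \<and> (\<forall>x y. E x y \<longrightarrow> f x \<noteq> f y)}"

text \<open>Tensor product H x K_2 with vertex set V(H) x {True, False} (True = side 1, False = side 2).\<close>
definition tensorK2 :: "('v \<Rightarrow> 'v \<Rightarrow> bool) \<Rightarrow> 'v \<times> bool \<Rightarrow> 'v \<times> bool \<Rightarrow> bool" where
  "tensorK2 E x y = (E (fst x) (fst y) \<and> snd x \<noteq> snd y)"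

definition hom_b :: "('v \<Rightarrow> 'v \<Rightarrow> bool) \<Rightarrow> nat set \<Rightarrow> nat set \<Rightarrow> nat" where
  "hom_b E A B = card {g :: 'v \<times> bool \<Rightarrow> nat.
      (\<forall>v. g (v, True) \<in> A) \<and> (\<forall>v. g (v, False) \<in> B) \<and>
      (\<forall>x y. tensorK2 E x y \<longrightarrow> g x \<noteq> g y)}"

definition cross_bipartite_swapping :: "('v \<Rightarrow> 'v \<Rightarrow> bool) \<Rightarrow> nat \<Rightarrow> bool" where
  "cross_bipartite_swapping E q =
     (\<forall>A B. A \<subseteq> {..<q} \<longrightarrow> B \<subseteq> {..<q} \<longrightarrow> hom_K E A * hom_K E B \<le> hom_b E A B)"

end

theory Submission
  imports Defs
begin

text \<open>By the symmetry of \<open>hom_b\<close> in \<open>A\<close> and \<open>B\<close> we may assume \<open>|A| \<le> |B|\<close>. Exchange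
  \<open>A - B\<close> for an equally large \<open>D \<subseteq> B - A\<close>: the set \<open>A' = (A \<inter> B) \<union> D\<close> is nested in \<open>B\<close>,
  so the hypothesis applies to \<open>(A', B)\<close>, and \<open>A'\<close> has as many colourings as \<open>A\<close>. A bijection
  \<open>s : A' \<rightarrow> A\<close> fixing \<open>A \<inter> B\<close> and sending \<open>D\<close> onto \<open>A - B\<close> never makes a colour of \<open>A'\<close>
  collide with a different colour of \<open>B\<close>, so relabelling side 1 by \<open>s\<close> embeds the
  homomorphisms counted by \<open>hom_b E A' B\<close> into those counted by \<open>hom_b E A B\<close>.\<close>

definition homs_K :: "('v \<Rightarrow> 'v \<Rightarrow> bool) \<Rightarrow> nat set \<Rightarrow> ('v \<Rightarrow> nat) set" where
  "homs_K E A = {f. (\<forall>x. f x \<in> A) \<and> (\<forall>x y. E x y \<longrightarrow> f x \<noteq> f y)}"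

definition homs_b :: "('v \<Rightarrow> 'v \<Rightarrow> bool) \<Rightarrow> nat set \<Rightarrow> nat set \<Rightarrow> ('v \<times> bool \<Rightarrow> nat) set" where
  "homs_b E A B = {g. (\<forall>v. g (v, True) \<in> A) \<and> (\<forall>v. g (v, False) \<in> B) \<and>
      (\<forall>x y. tensorK2 E x y \<longrightarrow> g x \<noteq> g y)}"

lemma hom_K_eq_card_homs_K: "hom_K E A = card (homs_K E A)"
  by (simp add: hom_K_def homs_K_def)

lemma hom_b_eq_card_homs_b: "hom_b E A B = card (homs_b E A B)"
  by (simp add: hom_b_def homs_b_def)

lemma tensorK2_proper_iff:
  "(\<forall>x y. tensorK2 E x y \<longrightarrow> g x \<noteq> g y) \<longleftrightarrow>
    (\<forall>u w. E u w \<longrightarrow> g (u, True) \<noteq> g (w, False) \<and> g (u, False) \<noteq> g (w, True))"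
  by (simp add: tensorK2_def split_paired_All all_bool_eq) blast

lemma mem_homs_b_iff:
  "g \<in> homs_b E A B \<longleftrightarrow> (\<forall>v. g (v, True) \<in> A) \<and> (\<forall>v. g (v, False) \<in> B) \<and>
    (\<forall>u w. E u w \<longrightarrow> g (u, True) \<noteq> g (w, False) \<and> g (u, False) \<noteq> g (w, True))"
  unfolding homs_b_def tensorK2_proper_iff by simp

lemma finite_funs_into:
  assumes "finite A"
  shows "finite {f :: 'a::finite \<Rightarrow> 'b. \<forall>x. f x \<in> A}"
  using finite_set_of_finite_funs[of "UNIV :: 'a set" A undefined] assms by simp

lemma finite_homs_K:
  "finite A \<Longrightarrow> finite (homs_K (E :: 'v::finite \<Rightarrow> 'v \<Rightarrow> bool) A)"
  by (rule finite_subset[OF _ finite_funs_into]) (auto simp: homs_K_def)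

lemma finite_homs_b:
  assumes "finite A" "finite B"
  shows "finite (homs_b (E :: 'v::finite \<Rightarrow> 'v \<Rightarrow> bool) A B)"
proof (rule finite_subset[OF _ finite_funs_into[of "A \<union> B"]])
  show "homs_b E A B \<subseteq> {f. \<forall>x. f x \<in> A \<union> B}"
    by (auto simp: homs_b_def) (metis (full_types) UnI1 UnI2 prod.collapse)
qed (use assms in simp)

lemma hom_K_le_if_card_le:
  fixes E :: "'v::finite \<Rightarrow> 'v \<Rightarrow> bool"
  assumes "finite A" "finite A'" "card A \<le> card A'"
  shows "hom_K E A \<le> hom_K E A'"
proof -
  obtain h where h: "h ` A \<subseteq> A'" "inj_on h A"
    using card_le_inj[OF assms] by blast
  have "(\<circ>) h ` homs_K E A \<subseteq> homs_K E A'"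
  proof
    fix f' assume "f' \<in> (\<circ>) h ` homs_K E A"
    then obtain f where f: "f \<in> homs_K E A" and f': "f' = h \<circ> f" by blast
    have "h (f x) \<noteq> h (f y)" if "E x y" for x y
      using f h(2) that by (auto simp: homs_K_def dest: inj_onD)
    then show "f' \<in> homs_K E A'"
      using f h(1) by (auto simp: homs_K_def f')
  qed
  moreover have "inj_on ((\<circ>) h) (homs_K E A)"
    using h(2) by (auto simp: homs_K_def inj_on_def fun_eq_iff)
  ultimately show ?thesis
    unfolding hom_K_eq_card_homs_K
    using card_inj_on_le finite_homs_K[OF assms(2)] by blast
qed

lemma hom_b_commute: "hom_b E A B = hom_b E B A"
proof -
  define swap where "swap g = (\<lambda>(v, b). g (v, \<not> b))" for g :: "'a \<times> bool \<Rightarrow> nat"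
  have swap_swap: "swap (swap g) = g" for g
    by (simp add: swap_def case_prod_beta)
  have swap_homs_b: "swap ` homs_b E A B \<subseteq> homs_b E B A" for A B
    by (auto simp: mem_homs_b_iff swap_def)
  have "bij_betw swap (homs_b E A B) (homs_b E B A)"
    by (rule bij_betw_byWitness[where f' = swap]) (use swap_swap swap_homs_b in auto)
  then show ?thesis
    unfolding hom_b_eq_card_homs_b by (rule bij_betw_same_card)
qed

lemma hom_b_le_relabel:
  fixes E :: "'v::finite \<Rightarrow> 'v \<Rightarrow> bool"
  assumes "finite A2" "finite B" "inj_on s A1" "s ` A1 \<subseteq> A2"
    and fix_B: "\<And>a. a \<in> A1 \<Longrightarrow> s a \<in> B \<Longrightarrow> s a = a"
  shows "hom_b E A1 B \<le> hom_b E A2 B"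
proof -
  define relabel where
    "relabel g = (\<lambda>(v, b). if b then s (g (v, b)) else g (v, b))" for g :: "'v \<times> bool \<Rightarrow> nat"
  have "relabel ` homs_b E A1 B \<subseteq> homs_b E A2 B"
  proof
    fix g' assume "g' \<in> relabel ` homs_b E A1 B"
    then obtain g where g: "g \<in> homs_b E A1 B" and g': "g' = relabel g" by blast
    have no_clash: "s a \<noteq> b" if "a \<in> A1" "b \<in> B" "a \<noteq> b" for a b
      using that fix_B by metis
    have "s (g (u, True)) \<noteq> g (w, False) \<and> g (u, False) \<noteq> s (g (w, True))" if "E u w" for u w
    proof -
      have "g (u, True) \<in> A1" "g (w, True) \<in> A1" "g (u, False) \<in> B" "g (w, False) \<in> B"
        "g (u, True) \<noteq> g (w, False)" "g (u, False) \<noteq> g (w, True)"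
        using g that by (auto simp: mem_homs_b_iff)
      then show ?thesis using no_clash by metis
    qed
    then show "g' \<in> homs_b E A2 B"
      using g assms(4) by (auto simp: mem_homs_b_iff g' relabel_def)
  qed
  moreover have "inj_on relabel (homs_b E A1 B)"
  proof (rule inj_onI)
    fix g h assume g: "g \<in> homs_b E A1 B" and h: "h \<in> homs_b E A1 B"
      and eq: "relabel g = relabel h"
    show "g = h"
    proof
      fix p :: "'v \<times> bool"
      obtain v b where p: "p = (v, b)" by fastforce
      have "relabel g (v, b) = relabel h (v, b)" using eq by simp
      then show "g p = h p"
        using g h assms(3) unfolding p by (cases b) (auto simp: relabel_def mem_homs_b_iff inj_on_def)
    qed
  qed
  ultimately show ?thesis
    unfolding hom_b_eq_card_homs_b
    using card_inj_on_le finite_homs_b[OF assms(1,2)] by blast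
qed

lemma obtain_subset_bij_fixing_common:
  assumes "finite A" "finite B" "card A \<le> card B"
  obtains A' s where "A' \<subseteq> B" "bij_betw s A' A" "\<And>a. a \<in> A' \<Longrightarrow> s a \<in> B \<Longrightarrow> s a = a"
proof -
  have "card A = card (A \<inter> B) + card (A - B)" "card B = card (A \<inter> B) + card (B - A)"
    using card_Int_Diff[OF assms(1), of B] card_Int_Diff[OF assms(2), of A]
    by (simp_all add: Int_commute)
  then have "card (A - B) \<le> card (B - A)"
    using assms(3) by linarith
  then obtain D where D: "D \<subseteq> B - A" "card D = card (A - B)"
    by (rule obtain_subset_with_card_n)
  then have "finite D"
    using assms(2) finite_subset by blast
  then obtain t where t: "bij_betw t D (A - B)"
    using finite_same_card_bij[OF _ _ D(2)] assms(1) by blast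
  define s where "s x = (if x \<in> D then t x else x)" for x
  have "bij_betw s (A \<inter> B) (A \<inter> B)"
    by (rule bij_betw_cong[THEN iffD1, OF _ bij_betw_id]) (use D in \<open>auto simp: s_def\<close>)
  moreover have "bij_betw s D (A - B)"
    using t by (rule bij_betw_cong[THEN iffD2, rotated]) (simp add: s_def)
  ultimately have "bij_betw s ((A \<inter> B) \<union> D) ((A \<inter> B) \<union> (A - B))"
    by (rule bij_betw_combine) (use D in auto)
  moreover have "(A \<inter> B) \<union> (A - B) = A" by blast
  moreover have "s a = a" if "a \<in> (A \<inter> B) \<union> D" "s a \<in> B" for a
    using that bij_betwE[OF t] by (auto simp: s_def split: if_splits)
  ultimately show ?thesis
    using that[of "(A \<inter> B) \<union> D" s] D(1) by auto
qed

lemma hom_K_mult_le_hom_b_if_card_le: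
  fixes E :: "'v::finite \<Rightarrow> 'v \<Rightarrow> bool"
  assumes nested: "\<forall>A B. A \<noteq> {} \<longrightarrow> A \<subseteq> B \<longrightarrow> B \<subseteq> {..<q} \<longrightarrow>
        hom_K E A * hom_K E B \<le> hom_b E A B"
    and "A \<subseteq> {..<q}" "B \<subseteq> {..<q}" "card A \<le> card B"
  shows "hom_K E A * hom_K E B \<le> hom_b E A B"
proof (cases "A = {}")
  case True
  then show ?thesis by (simp add: hom_K_def)
next
  case False
  have fin: "finite A" "finite B"
    using assms(2,3) finite_subset by blast+
  obtain A' s where A': "A' \<subseteq> B" "bij_betw s A' A" and fix_B: "\<And>a. a \<in> A' \<Longrightarrow> s a \<in> B \<Longrightarrow> s a = a"
    using obtain_subset_bij_fixing_common[OF fin assms(4)] by blast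
  have "finite A'"
    using A'(1) fin(2) finite_subset by blast
  moreover have "card A' = card A"
    using A'(2) by (rule bij_betw_same_card)
  moreover have "A' \<noteq> {}"
    using A'(2) False by (auto simp: bij_betw_def)
  ultimately have "hom_K E A * hom_K E B \<le> hom_K E A' * hom_K E B"
    using hom_K_le_if_card_le[OF fin(1), of A' E] by simp
  also have "\<dots> \<le> hom_b E A' B"
    using nested \<open>A' \<noteq> {}\<close> A'(1) assms(3) by blast
  also have "\<dots> \<le> hom_b E A B"
    using bij_betw_imp_surj_on[OF A'(2)]
    by (intro hom_b_le_relabel[OF fin bij_betw_imp_inj_on[OF A'(2)] _ fix_B]) simp_all
  finally show ?thesis .
qed

text \<open>None of the hypotheses on \<open>E\<close> and \<open>q\<close> is needed; in particular swapping the two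
  sides of \<open>H \<times> K\<^sub>2\<close> needs no symmetry of \<open>E\<close>.\<close>

theorem lemma6p1:
  fixes E :: "'v::finite \<Rightarrow> 'v \<Rightarrow> bool" and q :: nat
  assumes "\<And>x y. E x y \<Longrightarrow> E y x" and "\<And>x. \<not> E x x" and "0 < q"
  shows "cross_bipartite_swapping E q \<longleftrightarrow>
    (\<forall>A B. A \<noteq> {} \<longrightarrow> A \<subseteq> B \<longrightarrow> B \<subseteq> {..<q} \<longrightarrow>
        hom_K E A * hom_K E B \<le> hom_b E A B)"
    (is "_ \<longleftrightarrow> ?nested")
proof
  assume "cross_bipartite_swapping E q"
  then show ?nested
    unfolding cross_bipartite_swapping_def by blast
next
  assume nested: ?nested
  have "hom_K E A * hom_K E B \<le> hom_b E A B" if "A \<subseteq> {..<q}" "B \<subseteq> {..<q}" for A B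
  proof (cases "card A \<le> card B")
    case True
    then show ?thesis using hom_K_mult_le_hom_b_if_card_le[OF nested that] by blast
  next
    case False
    then have "hom_K E B * hom_K E A \<le> hom_b E B A"
      using hom_K_mult_le_hom_b_if_card_le[OF nested that(2,1)] by simp
    then show ?thesis by (simp add: hom_b_commute mult.commute)
  qed
  then show "cross_bipartite_swapping E q"
    unfolding cross_bipartite_swapping_def by blast
qed

end
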